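(* Let $\phi:\mathcal S\times\mathcal A\times[0,1]\to\mathbb R$ be bounded and such that $\mathcal Q_\phi$ is well defined, and set $\overline\phi=\sup_{s,a,\tau}\phi(s,a,\tau)$, $\underline\phi=\inf_{s,a,\tau}\phi(s,a,\tau)$. Let $F_\infty^{-1}(\cdot;s,a)$ and $\underline F_\infty^{-1}(\cdot;s,a)$ be the quantile functions of the fixed points of $\mathcal T^\pi$ and of $\mathcal Q_\phi\mathcal T^\pi$, respectively. Then for all $(s,a)$ and $\tau$, $$F_\infty^{-1}(\tau;s,a)-\phi(s,a,\tau)-\frac{\gamma}{1-\gamma}\overline\phi\ \le\ \underline F^{-1}_\infty(\tau;s,a)\ \le\ F_\infty^{-1}(\tau;s,a)-\phi(s,a,\tau)-\frac{\gamma}{1-\gamma}\underline\phi.$$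
   Context: Setting: an infinite-horizon discounted MDP with finite state set $\mathcal S$, finite action set $\mathcal A$, transition kernel $\mathcal P(\cdot\mid s,a)$, bounded reward distributions $\mathcal R(s,a)$ on $\mathbb R$, discount $\gamma\in(0,1)$, and a policy $\pi$. For a distribution $\nu$ on $\mathbb R$, $F_\nu$ is its CDF and $F_\nu^{-1}(\tau)=\inf\{x:\tau\le F_\nu(x)\}$ its quantile function. The distributional Bellman operator on $\eta\in\mathscr P(\mathbb R)^{\mathcal S\times\mathcal A}$ is defined by $F_{\mathcal T^\pi\eta(s,a)}(z)=\sum_{s',a'}\mathcal P(s'\mid s,a)\pi(a'\mid s')\int F_{\eta(s',a')}\big(\tfrac{z-r}{\gamma}\big)\,dF_{\mathcal R(s,a)}(r)$. Quantile distortion operator: $\mathcal Q_\phi\eta$ is defined by $F^{-1}_{\mathcal Q_\phi\eta(s,a)}(\tau)=F^{-1}_{\eta(s,a)}(\tau)-\phi(s,a,\tau)$ (with $\phi$ such that this is again a quantile function). Both $\mathcal T^\pi$ and $\mathcal Q_\phi\mathcal T^\pi$ are $\gamma$-contractions in the supremum Wasserstein metric $\bar w_p(\eta,\eta')=\sup_{(s,a)}w_p(\eta(s,a),\eta'(s,a))$ on distributions with bounded support, so they have unique fixed points. *)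

theory Defs
  imports "HOL-Probability.Probability"
begin

definition quantile :: "(real \<Rightarrow> real) \<Rightarrow> real \<Rightarrow> real" where
  "quantile F \<tau> = Inf {x. \<tau> \<le> F x}"

definition bounded_dist :: "real measure \<Rightarrow> bool" where
  "bounded_dist \<nu> \<longleftrightarrow> real_distribution \<nu> \<and> (\<exists>B. measure \<nu> {-B..B} = 1)"

text \<open>Finite MDP data: transition kernel P s a s', policy pi s a, reward
  distributions R s a, discount gamma.\<close>
definition valid_mdp ::
  "('s::finite \<Rightarrow> 'a::finite \<Rightarrow> 's \<Rightarrow> real) \<Rightarrow> ('s \<Rightarrow> 'a \<Rightarrow> real) \<Rightarrow>
   ('s \<Rightarrow> 'a \<Rightarrow> real measure) \<Rightarrow> real \<Rightarrow> bool" where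
  "valid_mdp P \<pi> R \<gamma> \<longleftrightarrow>
     (\<forall>s a s'. 0 \<le> P s a s') \<and> (\<forall>s a. (\<Sum>s'\<in>UNIV. P s a s') = 1) \<and>
     (\<forall>s a. 0 \<le> \<pi> s a) \<and> (\<forall>s. (\<Sum>a\<in>UNIV. \<pi> s a) = 1) \<and>
     (\<forall>s a. real_distribution (R s a)) \<and>
     (\<exists>B. \<forall>s a. measure (R s a) {-B..B} = 1) \<and>
     0 < \<gamma> \<and> \<gamma> < 1"

definition bellman_cdf ::
  "('s::finite \<Rightarrow> 'a::finite \<Rightarrow> 's \<Rightarrow> real) \<Rightarrow> ('s \<Rightarrow> 'a \<Rightarrow> real) \<Rightarrow>
   ('s \<Rightarrow> 'a \<Rightarrow> real measure) \<Rightarrow> real \<Rightarrow> ('s \<Rightarrow> 'a \<Rightarrow> real measure) \<Rightarrow>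
   's \<Rightarrow> 'a \<Rightarrow> real \<Rightarrow> real" where
  "bellman_cdf P \<pi> R \<gamma> \<eta> s a z =
     (\<Sum>s'\<in>UNIV. \<Sum>a'\<in>UNIV. P s a s' * \<pi> s' a' *
        integral\<^sup>L (R s a) (\<lambda>r. cdf (\<eta> s' a') ((z - r) / \<gamma>)))"

definition qdist_well_defined :: "('s \<Rightarrow> 'a \<Rightarrow> real \<Rightarrow> real) \<Rightarrow> bool" where
  "qdist_well_defined \<phi> \<longleftrightarrow>
     (\<forall>s a \<nu>. bounded_dist \<nu> \<longrightarrow>
        (\<exists>\<nu>'. real_distribution \<nu>' \<and>
           (\<forall>\<tau>\<in>{0<..<1}. quantile (cdf \<nu>') \<tau> = quantile (cdf \<nu>) \<tau> - \<phi> s a \<tau>)))"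

definition is_fixpoint_T where
  "is_fixpoint_T P \<pi> R \<gamma> \<eta> \<longleftrightarrow>
     (\<forall>s a. bounded_dist (\<eta> s a)) \<and>
     (\<forall>s a z. cdf (\<eta> s a) z = bellman_cdf P \<pi> R \<gamma> \<eta> s a z)"

definition is_fixpoint_QT where
  "is_fixpoint_QT P \<pi> R \<gamma> \<phi> \<eta> \<longleftrightarrow>
     (\<forall>s a. bounded_dist (\<eta> s a)) \<and>
     (\<forall>s a. \<forall>\<tau>\<in>{0<..<1}.
        quantile (cdf (\<eta> s a)) \<tau> = quantile (bellman_cdf P \<pi> R \<gamma> \<eta> s a) \<tau> - \<phi> s a \<tau>)"

end

theory Submission
  imports Defs
begin

text \<open>
  Write \<open>F\<close> and \<open>F'\<close> for the quantile functions of the fixed points \<open>\<eta>\<close> of \<open>T\<^sup>\<pi>\<close> and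
  \<open>\<eta>'\<close> of \<open>Q\<^sub>\<phi> T\<^sup>\<pi>\<close>. If \<open>F - F' \<le> k\<close> uniformly, then \<open>\<eta>'\<close> is stochastically dominated
  by \<open>\<eta>\<close> shifted by \<open>k\<close>; the Bellman operator is monotone for this order and turns the
  shift \<open>k\<close> into \<open>\<gamma> k\<close>, so the two fixed-point equations give \<open>F - F' \<le> \<gamma> k + \<phi>\<close>.
  Taking for \<open>k\<close> the supremum \<open>\<delta>\<close> of the (bounded) gap yields \<open>\<delta> \<le> \<gamma> \<delta> + sup \<phi>\<close>, hence
  \<open>\<delta> \<le> sup \<phi> / (1 - \<gamma>)\<close>, and feeding this back gives the lower bound of the theorem.
  The upper bound is the same argument for \<open>F' - F\<close>.
\<close>

lemma superlevel_nonempty_of_tendsto_1: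
  fixes F :: "real \<Rightarrow> real"
  assumes "(F \<longlongrightarrow> 1) at_top" "\<tau> < 1"
  shows "\<exists>x. \<tau> \<le> F x"
proof -
  have "\<forall>\<^sub>F x in at_top. \<tau> < F x" using order_tendstoD(1)[OF assms] .
  then obtain x where "\<tau> < F x" using eventually_happens by fastforce
  then show ?thesis by (auto intro: less_imp_le)
qed

lemma bdd_below_superlevel_of_tendsto_0:
  fixes F :: "real \<Rightarrow> real"
  assumes "(F \<longlongrightarrow> 0) at_bot" "0 < \<tau>"
  shows "bdd_below {x. \<tau> \<le> F x}"
proof -
  have "\<forall>\<^sub>F x in at_bot. F x < \<tau>" using order_tendstoD(2)[OF assms] .
  then obtain b where b: "\<And>x. x \<le> b \<Longrightarrow> F x < \<tau>"
    unfolding eventually_at_bot_linorder by auto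
  show ?thesis
  proof (rule bdd_belowI)
    fix x assume "x \<in> {x. \<tau> \<le> F x}"
    then show "b \<le> x" using b[of x] by (cases "x \<le> b") auto
  qed
qed

lemma quantile_le_shift:
  fixes F G :: "real \<Rightarrow> real"
  assumes shift: "\<And>z. F z \<le> G (z + h)" and "\<tau> \<le> F x" and "bdd_below {x. \<tau> \<le> G x}"
  shows "quantile G \<tau> \<le> quantile F \<tau> + h"
proof -
  have "quantile G \<tau> - h \<le> Inf {x. \<tau> \<le> F x}"
  proof (rule cInf_greatest)
    show "{x. \<tau> \<le> F x} \<noteq> {}" using assms(2) by auto
  next
    fix y assume "y \<in> {x. \<tau> \<le> F x}"
    then have "\<tau> \<le> G (y + h)" using shift[of y] by simp
    then have "quantile G \<tau> \<le> y + h"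
      unfolding quantile_def using assms(3) by (intro cInf_lower) auto
    then show "quantile G \<tau> - h \<le> y" by simp
  qed
  then show ?thesis unfolding quantile_def by simp
qed

context real_distribution
begin

lemma cdf_superlevel_nonempty: "\<tau> < 1 \<Longrightarrow> \<exists>x. \<tau> \<le> cdf M x"
  using cdf_lim_at_top_prob by (rule superlevel_nonempty_of_tendsto_1)

lemma bdd_below_cdf_superlevel: "0 < \<tau> \<Longrightarrow> bdd_below {x. \<tau> \<le> cdf M x}"
  using cdf_lim_at_bot by (rule bdd_below_superlevel_of_tendsto_0)

lemma quantile_le_iff:
  assumes "0 < \<tau>" "\<tau> < 1"
  shows "quantile (cdf M) \<tau> \<le> x \<longleftrightarrow> \<tau> \<le> cdf M x"
proof
  have bdd: "bdd_below {x. \<tau> \<le> cdf M x}" using assms(1) by (rule bdd_below_cdf_superlevel)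
  {
    assume "\<tau> \<le> cdf M x"
    then show "quantile (cdf M) \<tau> \<le> x" unfolding quantile_def using bdd by (intro cInf_lower) auto
  next
    assume q: "quantile (cdf M) \<tau> \<le> x"
    have "\<tau> \<le> cdf M y" if "x < y" for y
    proof -
      have "Inf {x. \<tau> \<le> cdf M x} < y" using q that unfolding quantile_def by simp
      then obtain z where "\<tau> \<le> cdf M z" "z < y"
        using cInf_less_iff[OF _ bdd] cdf_superlevel_nonempty[OF assms(2)] by auto
      then show ?thesis using cdf_nondecreasing[of z y] by simp
    qed
    then have "\<forall>\<^sub>F y in at_right x. \<tau> \<le> cdf M y"
      by (auto simp: eventually_at_right_field intro: exI[of _ "x + 1"])
    then show "\<tau> \<le> cdf M x"
      using cdf_is_right_cont[of x] unfolding continuous_within by (intro tendsto_lowerbound) auto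
  }
qed

lemma cdf_eq_1_above_support:
  assumes "measure M {-B..B} = 1" "B \<le> x"
  shows "cdf M x = 1"
proof -
  have "measure M {-B..B} \<le> cdf M x"
    unfolding cdf_def2 using assms(2) by (intro finite_measure_mono) auto
  then show ?thesis using assms(1) cdf_bounded_prob[of x] by linarith
qed

lemma cdf_eq_0_below_support:
  assumes "measure M {-B..B} = 1" "x < -B"
  shows "cdf M x = 0"
proof -
  have "cdf M x \<le> measure M (UNIV - {-B..B})"
    unfolding cdf_def2 using assms(2) by (intro finite_measure_mono) auto
  also have "\<dots> = 0" using assms(1) prob_compl[of "{-B..B}"] by simp
  finally show ?thesis using cdf_nonneg[of x] by linarith
qed

lemma abs_quantile_le_support:
  assumes "measure M {-B..B} = 1" "0 < \<tau>" "\<tau> < 1"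
  shows "\<bar>quantile (cdf M) \<tau>\<bar> \<le> B"
proof -
  have "quantile (cdf M) \<tau> \<le> B"
    using quantile_le_iff[OF assms(2,3)] cdf_eq_1_above_support[OF assms(1)] assms(3) by simp
  moreover have "-B \<le> quantile (cdf M) \<tau>"
  proof (rule ccontr)
    assume "\<not> -B \<le> quantile (cdf M) \<tau>"
    then have "cdf M (quantile (cdf M) \<tau>) = 0" by (intro cdf_eq_0_below_support[OF assms(1)]) simp
    then show False using quantile_le_iff[OF assms(2,3)] assms(2) by force
  qed
  ultimately show ?thesis by linarith
qed

end

lemma cdf_le_shift_of_quantile_le:
  assumes M: "real_distribution M" and N: "real_distribution N"
    and le: "\<And>t. t \<in> {0<..<1} \<Longrightarrow> quantile (cdf M) t \<le> quantile (cdf N) t + h"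
  shows "cdf N x \<le> cdf M (x + h)"
proof (rule ccontr)
  interpret M: real_distribution M by fact
  interpret N: real_distribution N by fact
  assume not_le: "\<not> cdf N x \<le> cdf M (x + h)"
  define t where "t = (cdf M (x + h) + cdf N x) / 2"
  have t: "0 < t" "t < 1" "cdf M (x + h) < t" "t < cdf N x"
    using not_le M.cdf_nonneg[of "x + h"] N.cdf_bounded_prob[of x] by (auto simp: t_def)
  have "quantile (cdf N) t \<le> x" using N.quantile_le_iff[OF t(1,2)] t(4) by simp
  moreover have "\<not> quantile (cdf M) t \<le> x + h" using M.quantile_le_iff[OF t(1,2)] t(3) by simp
  ultimately show False using le[of t] t(1,2) by simp
qed

lemma bounded_dist_uniform_bound:
  fixes \<zeta> :: "'i::finite \<Rightarrow> real measure"
  assumes "\<And>i. bounded_dist (\<zeta> i)"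
  shows "\<exists>B. \<forall>i. measure (\<zeta> i) {-B..B} = 1"
proof -
  obtain b where b: "\<And>i. measure (\<zeta> i) {-b i..b i} = 1"
    using assms unfolding bounded_dist_def by metis
  define B where "B = Max (range (\<lambda>i. \<bar>b i\<bar>))"
  have "measure (\<zeta> i) {-B..B} = 1" for i
  proof -
    interpret real_distribution "\<zeta> i" using assms unfolding bounded_dist_def by blast
    have "\<bar>b i\<bar> \<le> B" unfolding B_def by (rule Max_ge) auto
    then have "measure (\<zeta> i) {-b i..b i} \<le> measure (\<zeta> i) {-B..B}"
      by (intro finite_measure_mono) auto
    then show ?thesis using b[of i] prob_le_1[of "{-B..B}"] by linarith
  qed
  then show ?thesis by blast
qed

lemma bdd_above_quantile_gap:
  fixes \<zeta> \<xi> :: "'s::finite \<Rightarrow> 'a::finite \<Rightarrow> real measure"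
  assumes "\<And>s a. bounded_dist (\<zeta> s a)" "\<And>s a. bounded_dist (\<xi> s a)"
  shows "bdd_above ((\<lambda>(s, a, t). quantile (cdf (\<zeta> s a)) t - quantile (cdf (\<xi> s a)) t)
                      ` (UNIV \<times> UNIV \<times> {0<..<1}))"
proof -
  obtain B B' where B: "\<And>s a. measure (\<zeta> s a) {-B..B} = 1"
    and B': "\<And>s a. measure (\<xi> s a) {-B'..B'} = 1"
    using bounded_dist_uniform_bound[of "case_prod \<zeta>"] bounded_dist_uniform_bound[of "case_prod \<xi>"]
      assms by fastforce
  have "quantile (cdf (\<zeta> s a)) t - quantile (cdf (\<xi> s a)) t \<le> B + B'" if "t \<in> {0<..<1}" for s a t
    using real_distribution.abs_quantile_le_support[OF _ B, of s a t]
      real_distribution.abs_quantile_le_support[OF _ B', of s a t] assms that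
    unfolding bounded_dist_def by fastforce
  then show ?thesis by (intro bdd_aboveI2[where M = "B + B'"]) auto
qed

lemma integrable_cdf_comp:
  assumes "finite_measure M" "real_distribution N" "f \<in> borel_measurable M"
  shows "integrable M (\<lambda>r. cdf N (f r))"
proof -
  interpret M: finite_measure M by fact
  interpret N: real_distribution N by fact
  have "cdf N \<in> borel_measurable borel"
    by (rule borel_measurable_mono) (auto simp: mono_def N.cdf_nondecreasing)
  then have "(\<lambda>r. cdf N (f r)) \<in> borel_measurable M"
    using assms(3) by measurable
  moreover have "norm (cdf N (f r)) \<le> 1" for r
    using N.cdf_nonneg N.cdf_bounded_prob by simp
  ultimately show ?thesis by (intro M.integrable_const_bound) auto
qed

lemma integrable_bellman_integrand:
  assumes "real_distribution M" "real_distribution N"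
  shows "integrable M (\<lambda>r. cdf N ((z - r) / \<gamma>))"
proof -
  interpret real_distribution M by fact
  show ?thesis using assms(2) by (intro integrable_cdf_comp) auto
qed

lemma bellman_cdf_mono_shift:
  assumes mdp: "valid_mdp P \<pi> R \<gamma>"
    and "\<And>s a. real_distribution (\<zeta> s a)" "\<And>s a. real_distribution (\<xi> s a)"
    and le: "\<And>s a x. cdf (\<zeta> s a) x \<le> cdf (\<xi> s a) (x + k)"
  shows "bellman_cdf P \<pi> R \<gamma> \<zeta> s a z \<le> bellman_cdf P \<pi> R \<gamma> \<xi> s a (z + \<gamma> * k)"
proof -
  have "0 < \<gamma>" and R: "real_distribution (R s a)"
    and P: "\<And>s a s'. 0 \<le> P s a s'" and \<pi>: "\<And>s a. 0 \<le> \<pi> s a"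
    using mdp unfolding valid_mdp_def by auto
  then have shift: "(z + \<gamma> * k - r) / \<gamma> = (z - r) / \<gamma> + k" for r
    by (simp add: field_simps)
  show ?thesis unfolding bellman_cdf_def shift
  proof (intro sum_mono mult_left_mono integral_mono)
    fix s' a'
    show "integrable (R s a) (\<lambda>r. cdf (\<zeta> s' a') ((z - r) / \<gamma>))"
      using R assms(2) by (rule integrable_bellman_integrand)
    show "integrable (R s a) (\<lambda>r. cdf (\<xi> s' a') ((z - r) / \<gamma> + k))"
      using integrable_bellman_integrand[OF R assms(3), of s' a' "z + \<gamma> * k" \<gamma>]
      unfolding shift .
  qed (use le P \<pi> in auto)
qed

lemma bellman_cdf_eq_const:
  assumes mdp: "valid_mdp P \<pi> R \<gamma>"
    and "\<And>s' a'. real_distribution (\<zeta> s' a')"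
    and const: "\<And>s' a'. AE r in R s a. cdf (\<zeta> s' a') ((z - r) / \<gamma>) = c"
  shows "bellman_cdf P \<pi> R \<gamma> \<zeta> s a z = c"
proof -
  have R: "real_distribution (R s a)" and P: "(\<Sum>s'\<in>UNIV. P s a s') = 1"
    and \<pi>: "\<And>s'. (\<Sum>a'\<in>UNIV. \<pi> s' a') = 1"
    using mdp unfolding valid_mdp_def by auto
  interpret real_distribution "R s a" by (fact R)
  have "integral\<^sup>L (R s a) (\<lambda>r. cdf (\<zeta> s' a') ((z - r) / \<gamma>)) = c" for s' a'
  proof -
    have "integral\<^sup>L (R s a) (\<lambda>r. cdf (\<zeta> s' a') ((z - r) / \<gamma>)) = integral\<^sup>L (R s a) (\<lambda>r. c)"
      using const integrable_bellman_integrand[OF R assms(2)]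
      by (intro integral_cong_AE) (auto intro: borel_measurable_integrable)
    then show ?thesis using prob_space by simp
  qed
  then show ?thesis
    by (simp add: bellman_cdf_def mult.assoc flip: sum_distrib_left sum_distrib_right)
      (simp add: \<pi> P flip: sum_distrib_right)
qed

lemma
  fixes \<zeta> :: "'s::finite \<Rightarrow> 'a::finite \<Rightarrow> real measure"
  assumes mdp: "valid_mdp P \<pi> R \<gamma>" and bounded: "\<And>s a. bounded_dist (\<zeta> s a)"
  shows bellman_cdf_lim_at_top: "(bellman_cdf P \<pi> R \<gamma> \<zeta> s a \<longlongrightarrow> 1) at_top"
    and bellman_cdf_lim_at_bot: "(bellman_cdf P \<pi> R \<gamma> \<zeta> s a \<longlongrightarrow> 0) at_bot"
proof -
  obtain B where B: "\<And>s a. measure (\<zeta> s a) {-B..B} = 1"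
    using bounded_dist_uniform_bound[of "case_prod \<zeta>"] bounded by fastforce
  obtain BR where BR: "measure (R s a) {-BR..BR} = 1"
    using mdp unfolding valid_mdp_def by blast
  have \<gamma>: "0 < \<gamma>" and R: "real_distribution (R s a)"
    using mdp unfolding valid_mdp_def by auto
  have \<zeta>: "\<And>s a. real_distribution (\<zeta> s a)" using bounded unfolding bounded_dist_def by blast
  have reward_bounded: "AE r in R s a. \<bar>r\<bar> \<le> \<bar>BR\<bar>"
  proof -
    interpret real_distribution "R s a" by (fact R)
    have "AE r in R s a. r \<in> {-BR..BR}" using BR by (intro AE_prob_1) auto
    then show ?thesis by eventually_elim auto
  qed
  have \<gamma>B: "\<gamma> * B \<le> \<gamma> * \<bar>B\<bar>" using \<gamma> by (intro mult_left_mono) auto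
  define Z where "Z = \<gamma> * \<bar>B\<bar> + \<bar>BR\<bar>"
  have "bellman_cdf P \<pi> R \<gamma> \<zeta> s a z = 1" if "Z \<le> z" for z
  proof -
    have "AE r in R s a. cdf (\<zeta> s' a') ((z - r) / \<gamma>) = 1" for s' a'
      using reward_bounded
    proof eventually_elim
      case (elim r)
      then have "\<gamma> * B \<le> z - r" using \<open>Z \<le> z\<close> \<gamma>B unfolding Z_def by linarith
      then have "B \<le> (z - r) / \<gamma>" using \<gamma> by (simp add: pos_le_divide_eq mult.commute)
      then show ?case by (rule real_distribution.cdf_eq_1_above_support[OF \<zeta> B])
    qed
    then show ?thesis by (rule bellman_cdf_eq_const[OF mdp \<zeta>])
  qed
  then show "(bellman_cdf P \<pi> R \<gamma> \<zeta> s a \<longlongrightarrow> 1) at_top"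
    by (intro tendsto_eventually) (auto simp: eventually_at_top_linorder)
  have "bellman_cdf P \<pi> R \<gamma> \<zeta> s a z = 0" if "z \<le> -Z - 1" for z
  proof -
    have "AE r in R s a. cdf (\<zeta> s' a') ((z - r) / \<gamma>) = 0" for s' a'
      using reward_bounded
    proof eventually_elim
      case (elim r)
      then have "z - r < \<gamma> * -B" using \<open>z \<le> -Z - 1\<close> \<gamma>B unfolding Z_def by linarith
      then have "(z - r) / \<gamma> < -B" using \<gamma> by (simp add: pos_divide_less_eq mult.commute)
      then show ?case by (rule real_distribution.cdf_eq_0_below_support[OF \<zeta> B])
    qed
    then show ?thesis by (rule bellman_cdf_eq_const[OF mdp \<zeta>])
  qed
  then show "(bellman_cdf P \<pi> R \<gamma> \<zeta> s a \<longlongrightarrow> 0) at_bot"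
    by (intro tendsto_eventually) (auto simp: eventually_at_bot_linorder)
qed

lemma quantile_gap_T_QT_contract:
  assumes mdp: "valid_mdp P \<pi> R \<gamma>"
    and fixT: "is_fixpoint_T P \<pi> R \<gamma> \<eta>" and fixQT: "is_fixpoint_QT P \<pi> R \<gamma> \<phi> \<eta>'"
    and gap: "\<And>s a t. t \<in> {0<..<1} \<Longrightarrow> quantile (cdf (\<eta> s a)) t - quantile (cdf (\<eta>' s a)) t \<le> k"
    and t: "t \<in> {0<..<1}"
  shows "quantile (cdf (\<eta> s a)) t - quantile (cdf (\<eta>' s a)) t \<le> \<gamma> * k + \<phi> s a t"
proof -
  have \<eta>: "\<And>s a. real_distribution (\<eta> s a)" and \<eta>': "\<And>s a. bounded_dist (\<eta>' s a)"
    and T\<eta>: "\<And>s a z. cdf (\<eta> s a) z = bellman_cdf P \<pi> R \<gamma> \<eta> s a z"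
    using fixT fixQT unfolding is_fixpoint_T_def is_fixpoint_QT_def bounded_dist_def by auto
  then have \<eta>'_dist: "\<And>s a. real_distribution (\<eta>' s a)" unfolding bounded_dist_def by blast
  then have dom: "cdf (\<eta>' s a) x \<le> cdf (\<eta> s a) (x + k)" for s a x
    using gap by (intro cdf_le_shift_of_quantile_le[OF \<eta>]) (auto simp: algebra_simps)
  have "bellman_cdf P \<pi> R \<gamma> \<eta>' s a z \<le> cdf (\<eta> s a) (z + \<gamma> * k)" for z
    using bellman_cdf_mono_shift[where \<zeta> = \<eta>' and \<xi> = \<eta>, OF mdp \<eta>'_dist \<eta> dom]
      T\<eta>[of s a "z + \<gamma> * k"] by (metis (no_types))
  moreover obtain x where "t \<le> bellman_cdf P \<pi> R \<gamma> \<eta>' s a x"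
    using superlevel_nonempty_of_tendsto_1[OF bellman_cdf_lim_at_top[where \<zeta> = \<eta>', OF mdp \<eta>']] t
    by force
  ultimately have "quantile (cdf (\<eta> s a)) t \<le> quantile (bellman_cdf P \<pi> R \<gamma> \<eta>' s a) t + \<gamma> * k"
    using t real_distribution.bdd_below_cdf_superlevel[OF \<eta>] by (intro quantile_le_shift) auto
  then show ?thesis using fixQT t unfolding is_fixpoint_QT_def by simp
qed

lemma quantile_gap_QT_T_contract:
  assumes mdp: "valid_mdp P \<pi> R \<gamma>"
    and fixT: "is_fixpoint_T P \<pi> R \<gamma> \<eta>" and fixQT: "is_fixpoint_QT P \<pi> R \<gamma> \<phi> \<eta>'"
    and gap: "\<And>s a t. t \<in> {0<..<1} \<Longrightarrow> quantile (cdf (\<eta>' s a)) t - quantile (cdf (\<eta> s a)) t \<le> k"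
    and t: "t \<in> {0<..<1}"
  shows "quantile (cdf (\<eta>' s a)) t - quantile (cdf (\<eta> s a)) t \<le> \<gamma> * k - \<phi> s a t"
proof -
  have \<eta>: "\<And>s a. real_distribution (\<eta> s a)" and \<eta>': "\<And>s a. bounded_dist (\<eta>' s a)"
    and T\<eta>: "\<And>s a z. cdf (\<eta> s a) z = bellman_cdf P \<pi> R \<gamma> \<eta> s a z"
    using fixT fixQT unfolding is_fixpoint_T_def is_fixpoint_QT_def bounded_dist_def by auto
  then have \<eta>'_dist: "\<And>s a. real_distribution (\<eta>' s a)" unfolding bounded_dist_def by blast
  then have dom: "cdf (\<eta> s a) x \<le> cdf (\<eta>' s a) (x + k)" for s a x
    using gap by (intro cdf_le_shift_of_quantile_le[OF _ \<eta>]) (auto simp: algebra_simps)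
  have "cdf (\<eta> s a) z \<le> bellman_cdf P \<pi> R \<gamma> \<eta>' s a (z + \<gamma> * k)" for z
    using bellman_cdf_mono_shift[where \<zeta> = \<eta> and \<xi> = \<eta>', OF mdp \<eta> \<eta>'_dist dom]
      T\<eta>[of s a z] by (metis (no_types))
  moreover obtain x where "t \<le> cdf (\<eta> s a) x"
    using real_distribution.cdf_superlevel_nonempty[OF \<eta>] t by force
  ultimately have "quantile (bellman_cdf P \<pi> R \<gamma> \<eta>' s a) t \<le> quantile (cdf (\<eta> s a)) t + \<gamma> * k"
    using t bdd_below_superlevel_of_tendsto_0[OF bellman_cdf_lim_at_bot[where \<zeta> = \<eta>', OF mdp \<eta>']]
    by (intro quantile_le_shift) auto
  then show ?thesis using fixQT t unfolding is_fixpoint_QT_def by simp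
qed

lemma le_of_self_improving_bound:
  fixes f g :: "'x \<Rightarrow> real"
  assumes "X \<noteq> {}" "bdd_above (f ` X)" "0 \<le> \<gamma>" "\<gamma> < 1"
    and improve: "\<And>k x. (\<And>y. y \<in> X \<Longrightarrow> f y \<le> k) \<Longrightarrow> x \<in> X \<Longrightarrow> f x \<le> \<gamma> * k + g x"
    and g_le: "\<And>x. x \<in> X \<Longrightarrow> g x \<le> b"
    and "x \<in> X"
  shows "f x \<le> g x + \<gamma> / (1 - \<gamma>) * b"
proof -
  define \<delta> where "\<delta> = Sup (f ` X)"
  have f_le: "f y \<le> \<delta>" if "y \<in> X" for y
    unfolding \<delta>_def using that assms(2) by (rule cSUP_upper)
  have "\<delta> \<le> \<gamma> * \<delta> + b"
    unfolding \<delta>_def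
  proof (rule cSUP_least)
    fix y assume y: "y \<in> X"
    have "f y \<le> \<gamma> * \<delta> + g y" using improve[OF f_le y] .
    then show "f y \<le> \<gamma> * Sup (f ` X) + b" using g_le[OF y] unfolding \<delta>_def by linarith
  qed (fact assms(1))
  then have "\<delta> * (1 - \<gamma>) \<le> b" by (simp add: algebra_simps)
  then have "\<delta> \<le> b / (1 - \<gamma>)" using assms(4) by (simp add: pos_le_divide_eq)
  then have "\<gamma> * \<delta> \<le> \<gamma> / (1 - \<gamma>) * b" using mult_left_mono[OF _ assms(3)] by fastforce
  moreover have "f x \<le> \<gamma> * \<delta> + g x" using improve[OF f_le \<open>x \<in> X\<close>] .
  ultimately show ?thesis by simp
qed

lemma quantile_gap_T_QT_bound:
  fixes \<eta> \<eta>' :: "'s::finite \<Rightarrow> 'a::finite \<Rightarrow> real measure"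
  assumes mdp: "valid_mdp P \<pi> R \<gamma>"
    and fixT: "is_fixpoint_T P \<pi> R \<gamma> \<eta>" and fixQT: "is_fixpoint_QT P \<pi> R \<gamma> \<phi> \<eta>'"
    and \<phi>_le: "\<And>s a t. t \<in> {0<..<1} \<Longrightarrow> \<phi> s a t \<le> b"
    and \<tau>: "\<tau> \<in> {0<..<1}"
  shows "quantile (cdf (\<eta> s a)) \<tau> - quantile (cdf (\<eta>' s a)) \<tau> \<le> \<phi> s a \<tau> + \<gamma> / (1 - \<gamma>) * b"
proof -
  let ?gap = "\<lambda>(s, a, t). quantile (cdf (\<eta> s a)) t - quantile (cdf (\<eta>' s a)) t"
  have "?gap (s, a, \<tau>) \<le> (\<lambda>(s, a, t). \<phi> s a t) (s, a, \<tau>) + \<gamma> / (1 - \<gamma>) * b"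
  proof (rule le_of_self_improving_bound[where X = "UNIV \<times> UNIV \<times> {0<..<1}"])
    show "bdd_above (?gap ` (UNIV \<times> UNIV \<times> {0<..<1}))"
      using fixT fixQT unfolding is_fixpoint_T_def is_fixpoint_QT_def
      by (intro bdd_above_quantile_gap) auto
  next
    fix k and x :: "'s \<times> 'a \<times> real"
    assume gap: "\<And>y. y \<in> UNIV \<times> UNIV \<times> {0<..<1} \<Longrightarrow> ?gap y \<le> k"
      and "x \<in> UNIV \<times> UNIV \<times> {0<..<1}"
    then obtain s' a' t where x: "x = (s', a', t)" and t: "t \<in> {0<..<1}" by auto
    have "quantile (cdf (\<eta> s a)) t - quantile (cdf (\<eta>' s a)) t \<le> k" if "t \<in> {0<..<1}" for s a t
      using gap[of "(s, a, t)"] that by simp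
    then show "?gap x \<le> \<gamma> * k + (\<lambda>(s, a, t). \<phi> s a t) x"
      unfolding x using quantile_gap_T_QT_contract[OF mdp fixT fixQT _ t] by simp
  qed (use mdp \<phi>_le \<tau> in \<open>auto simp: valid_mdp_def\<close>)
  then show ?thesis by simp
qed

lemma quantile_gap_QT_T_bound:
  fixes \<eta> \<eta>' :: "'s::finite \<Rightarrow> 'a::finite \<Rightarrow> real measure"
  assumes mdp: "valid_mdp P \<pi> R \<gamma>"
    and fixT: "is_fixpoint_T P \<pi> R \<gamma> \<eta>" and fixQT: "is_fixpoint_QT P \<pi> R \<gamma> \<phi> \<eta>'"
    and \<phi>_ge: "\<And>s a t. t \<in> {0<..<1} \<Longrightarrow> b \<le> \<phi> s a t"
    and \<tau>: "\<tau> \<in> {0<..<1}"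
  shows "quantile (cdf (\<eta>' s a)) \<tau> - quantile (cdf (\<eta> s a)) \<tau> \<le> - \<phi> s a \<tau> - \<gamma> / (1 - \<gamma>) * b"
proof -
  let ?gap = "\<lambda>(s, a, t). quantile (cdf (\<eta>' s a)) t - quantile (cdf (\<eta> s a)) t"
  have "?gap (s, a, \<tau>) \<le> (\<lambda>(s, a, t). - \<phi> s a t) (s, a, \<tau>) + \<gamma> / (1 - \<gamma>) * - b"
  proof (rule le_of_self_improving_bound[where X = "UNIV \<times> UNIV \<times> {0<..<1}"])
    show "bdd_above (?gap ` (UNIV \<times> UNIV \<times> {0<..<1}))"
      using fixT fixQT unfolding is_fixpoint_T_def is_fixpoint_QT_def
      by (intro bdd_above_quantile_gap) auto
  next
    fix k and x :: "'s \<times> 'a \<times> real"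
    assume gap: "\<And>y. y \<in> UNIV \<times> UNIV \<times> {0<..<1} \<Longrightarrow> ?gap y \<le> k"
      and "x \<in> UNIV \<times> UNIV \<times> {0<..<1}"
    then obtain s' a' t where x: "x = (s', a', t)" and t: "t \<in> {0<..<1}" by auto
    have "quantile (cdf (\<eta>' s a)) t - quantile (cdf (\<eta> s a)) t \<le> k" if "t \<in> {0<..<1}" for s a t
      using gap[of "(s, a, t)"] that by simp
    then show "?gap x \<le> \<gamma> * k + (\<lambda>(s, a, t). - \<phi> s a t) x"
      unfolding x using quantile_gap_QT_T_contract[OF mdp fixT fixQT _ t] by simp
  qed (use mdp \<phi>_ge \<tau> in \<open>auto simp: valid_mdp_def\<close>)
  then show ?thesis by simp
qed

theorem theorem3:
  fixes P :: "'s::finite \<Rightarrow> 'a::finite \<Rightarrow> 's \<Rightarrow> real"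
    and \<pi> :: "'s \<Rightarrow> 'a \<Rightarrow> real"
    and R :: "'s \<Rightarrow> 'a \<Rightarrow> real measure"
    and \<gamma> :: real
    and \<phi> :: "'s \<Rightarrow> 'a \<Rightarrow> real \<Rightarrow> real"
    and \<eta> \<eta>' :: "'s \<Rightarrow> 'a \<Rightarrow> real measure"
  assumes mdp: "valid_mdp P \<pi> R \<gamma>"
    and phi_bdd: "\<exists>C. \<forall>s a. \<forall>\<tau>\<in>{0..1}. \<bar>\<phi> s a \<tau>\<bar> \<le> C"
    and phi_wd: "qdist_well_defined \<phi>"
    and fixT: "is_fixpoint_T P \<pi> R \<gamma> \<eta>"
    and fixQT: "is_fixpoint_QT P \<pi> R \<gamma> \<phi> \<eta>'"
    and tau: "\<tau> \<in> {0<..<1}"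
  shows "quantile (cdf (\<eta> s a)) \<tau> - \<phi> s a \<tau>
           - \<gamma> / (1 - \<gamma>) * (SUP x\<in>UNIV \<times> UNIV \<times> {0..1}. \<phi> (fst x) (fst (snd x)) (snd (snd x)))
         \<le> quantile (cdf (\<eta>' s a)) \<tau>
       \<and> quantile (cdf (\<eta>' s a)) \<tau>
         \<le> quantile (cdf (\<eta> s a)) \<tau> - \<phi> s a \<tau>
           - \<gamma> / (1 - \<gamma>) * (INF x\<in>UNIV \<times> UNIV \<times> {0..1}. \<phi> (fst x) (fst (snd x)) (snd (snd x)))"
proof -
  let ?\<Phi> = "(\<lambda>x. \<phi> (fst x) (fst (snd x)) (snd (snd x))) ` (UNIV \<times> UNIV \<times> {0..1})"
  obtain C where C: "\<And>s a t. t \<in> {0..1} \<Longrightarrow> \<bar>\<phi> s a t\<bar> \<le> C" using phi_bdd by blast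
  have bdd: "bdd_above ?\<Phi>" "bdd_below ?\<Phi>"
    using C by (auto intro!: bdd_aboveI2[where M = C] bdd_belowI2[where m = "-C"]
                     simp: abs_le_iff minus_le_iff)
  have in_dom: "(s', a', t) \<in> UNIV \<times> UNIV \<times> {0..1}" if "t \<in> {0<..<1}" for s' a' and t :: real
    using that by auto
  have "\<phi> s' a' t \<le> Sup ?\<Phi>" if "t \<in> {0<..<1}" for s' a' t
    using cSUP_upper[OF in_dom[OF that] bdd(1)] by simp
  then have "quantile (cdf (\<eta> s a)) \<tau> - quantile (cdf (\<eta>' s a)) \<tau> \<le> \<phi> s a \<tau> + \<gamma> / (1 - \<gamma>) * Sup ?\<Phi>"
    by (rule quantile_gap_T_QT_bound[OF mdp fixT fixQT _ tau])
  moreover have "Inf ?\<Phi> \<le> \<phi> s' a' t" if "t \<in> {0<..<1}" for s' a' t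
    using cINF_lower[OF bdd(2) in_dom[OF that]] by simp
  then have "quantile (cdf (\<eta>' s a)) \<tau> - quantile (cdf (\<eta> s a)) \<tau> \<le> - \<phi> s a \<tau> - \<gamma> / (1 - \<gamma>) * Inf ?\<Phi>"
    by (rule quantile_gap_QT_T_bound[OF mdp fixT fixQT _ tau])
  ultimately show ?thesis by linarith
qed

end
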